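(* Consider the controlled adoption–opinion model and the MPC problem $\mathcal P(t)$ described in the context, with initial conditions $a(0),d(0),x(0)\in[0,1]^n$. Assume that $\mathcal P(0)$ is feasible. Then the MPC problem is recursively feasible: along the closed-loop trajectory obtained by applying, at each time $t$, the first element $u^*(0|t)$ of an optimal solution of $\mathcal P(t)$, the problem $\mathcal P(t)$ is feasible for all $t\ge0$.
   Context: Setting: $n\ge1$, $W,\tilde W\in\mathbb R_+^{n\times n}$, $\beta_i,\gamma_i,\theta_i,\delta_i\in[0,1]$, $\alpha_i,\lambda_i,\xi_i\ge0$ with $\alpha_i+\lambda_i+\xi_i=1$; $B,\Gamma,\Theta,\Delta,\Lambda,\Xi$ the diagonal matrices of $\beta,\gamma,\theta,\delta,\lambda,\xi$. The uncontrolled model on $(a,d,x)$ is $a(t+1)=a(t)+B\,\mathrm{diag}(x(t))\mathrm{diag}(\mathbf 1-a(t)-d(t))Wa(t)-\Delta a(t)$, $d(t+1)=d(t)-\Gamma\mathrm{diag}(x(t))d(t)+\Delta a(t)+\Theta(I-\mathrm{diag}(x(t)))(\mathbf 1-a(t)-d(t))$, $x(t+1)=(I-\Lambda-\Xi)x(0)+\Lambda\tilde Wx(t)+\Xi Wa(t)$. The controlled model, with input $u(t)\in\mathbb R^n$, is obtained by one fixed choice among: (opinion control) replacing the $x$-equation by $x(t+1)=(I-\Lambda-\Xi)(x(0)+u(t))+\Lambda\tilde Wx(t)+\Xi Wa(t)$; ($\beta$-control) replacing $\beta_i x_i(t)$ by $\beta_i x_i(t)(1+u_i(t))$; ($\delta$-control)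 replacing $\delta_i$ by $\delta_i(1-u_i(t))$. Write the controlled model as $(a,d,x)(k+1)=(F_1,F_2,F_3)(a(k),d(k),x(k),u(k))$. Fix a budget $C>0$, a horizon $N\ge1$ and weights $Q^a_i,Q^d_i,L_i$. Let $\bar u$ be the optimal constant control: a minimizer of $\sum_i[-Q^a_i(a^*_{c,i})^2+Q^d_i(d^*_{c,i})^2+L_iu_i^2]$ over constant controls $u$ with $\mathbf 1^\top u\le C$, $0\le u\le \mathbf 1-x(0)$ (entrywise), together with conditions guaranteeing $R^A_{0,\min}>1$ and asymptotic stability of an adoption-diffused equilibrium, where $(a_c^*,d_c^*,x_c^* )$ denotes the equilibrium of the controlled model under the constant input $\bar u$ (so $\bar u$ satisfies the budget and box constraints and $(a_c^*,d_c^*,x_c^* )$ is a fixed point of $(F_1,F_2,F_3)(\cdot,\cdot,\cdot,\bar u)$). The MPC problem $\mathcal P(t)$ at time $t$, given the current state $(a(t),d(t),x(t))$, is: minimize over $U(t)=\{u(0|t),\dots,u(N-1|t)\}$ the cost $\sum_{k=0}^{N-1}\sum_{i=1}^n[-Q^a_ia_i^2(k|t)+Q^d_id_i^2(k|t)+L_iu_i^2(k|t)]$ subject to $\mathbf 1^\top u(k|t)\le C$ and $0\le u(k|t)\le\mathbf 1-x(0)$ for $k=0,\dots,N-1$, $(a,d,x)(0|t)=(a(t),d(t),x(t))$, $(a,d,x)(k+1|t)=(F_1,F_2,F_3)(a(k|t),d(k|t),x(k|t),u(k|t))$, and terminal constraint $(a(N|t),d(N|t),x(N|t))=(a_c^*,d_c^*,x_c^*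 )$. $\mathcal P(t)$ is feasible if some $U(t)$ satisfies all these constraints. *)

theory Defs
  imports "HOL-Analysis.Analysis"
begin

text \<open>Vectors are indexed by the finite type 'n (n = CARD('n)).
  beta, gamma, theta, delta, lambda, xi are the diagonals of B, Gamma, Theta, Delta, Lambda, Xi;
  alpha_i = 1 - lambda_i - xi_i.\<close>

record 'n params =
  beta  :: "real ^ 'n"
  gamma :: "real ^ 'n"
  theta :: "real ^ 'n"
  delta :: "real ^ 'n"
  alpha :: "real ^ 'n"
  lam   :: "real ^ 'n"
  xi    :: "real ^ 'n"
  W     :: "real ^ 'n ^ 'n"
  Wt    :: "real ^ 'n ^ 'n"

definition valid_params :: "('n::finite) params \<Rightarrow> bool" where
  "valid_params P \<longleftrightarrow>
     (\<forall>i j. 0 \<le> W P $ i $ j \<and> 0 \<le> Wt P $ i $ j) \<and>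
     (\<forall>i. 0 \<le> beta P $ i \<and> beta P $ i \<le> 1 \<and> 0 \<le> gamma P $ i \<and> gamma P $ i \<le> 1 \<and>
          0 \<le> theta P $ i \<and> theta P $ i \<le> 1 \<and> 0 \<le> delta P $ i \<and> delta P $ i \<le> 1 \<and>
          0 \<le> alpha P $ i \<and> 0 \<le> lam P $ i \<and> 0 \<le> xi P $ i \<and>
          alpha P $ i + lam P $ i + xi P $ i = 1)"

text \<open>The three (mutually exclusive) ways of applying the control input.\<close>
datatype ctrl = OpinionCtrl | BetaCtrl | DeltaCtrl

type_synonym 'n state = "(real ^ 'n) \<times> (real ^ 'n) \<times> (real ^ 'n)"

text \<open>Controlled dynamics (F1,F2,F3); x0 is the initial opinion x(0), which enters the
  x-equation at every time step.\<close>
definition F :: "ctrl \<Rightarrow> ('n::finite) params \<Rightarrow> real ^ 'n \<Rightarrow> 'n state \<Rightarrow> real ^ 'n \<Rightarrow> 'n state" where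
  "F m P x0 s u = (case s of (a, d, x) \<Rightarrow>
     (let Wa = W P *v a;
          bx = (\<chi> i. beta P $ i * x $ i * (if m = BetaCtrl then 1 + u $ i else 1));
          de = (\<chi> i. delta P $ i * (if m = DeltaCtrl then 1 - u $ i else 1))
      in ((\<chi> i. a $ i + bx $ i * (1 - a $ i - d $ i) * Wa $ i - de $ i * a $ i),
          (\<chi> i. d $ i - gamma P $ i * x $ i * d $ i + de $ i * a $ i
                 + theta P $ i * (1 - x $ i) * (1 - a $ i - d $ i)),
          (\<chi> i. (1 - lam P $ i - xi P $ i) * (x0 $ i + (if m = OpinionCtrl then u $ i else 0))
                 + lam P $ i * (Wt P *v x) $ i + xi P $ i * Wa $ i))))"

fun traj :: "ctrl \<Rightarrow> ('n::finite) params \<Rightarrow> real ^ 'n \<Rightarrow> 'n state \<Rightarrow> (nat \<Rightarrow> real ^ 'n) \<Rightarrow> nat \<Rightarrow> 'n state" where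
  "traj m P x0 s U 0 = s"
| "traj m P x0 s U (Suc k) = F m P x0 (traj m P x0 s U k) (U k)"

definition admissible :: "real \<Rightarrow> real ^ ('n::finite) \<Rightarrow> real ^ 'n \<Rightarrow> bool" where
  "admissible C x0 u \<longleftrightarrow> (\<Sum>i\<in>UNIV. u $ i) \<le> C \<and> (\<forall>i. 0 \<le> u $ i \<and> u $ i \<le> 1 - x0 $ i)"

text \<open>U (only its values at 0..N-1 matter) satisfies all constraints of P(t) when the current
  state is s, with terminal state seq = (a_c*, d_c*, x_c*).\<close>
definition mpc_feasible_seq ::
  "ctrl \<Rightarrow> ('n::finite) params \<Rightarrow> real ^ 'n \<Rightarrow> real \<Rightarrow> nat \<Rightarrow> 'n state \<Rightarrow> 'n state \<Rightarrow> (nat \<Rightarrow> real ^ 'n) \<Rightarrow> bool" where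
  "mpc_feasible_seq m P x0 C N seq s U \<longleftrightarrow>
     (\<forall>k<N. admissible C x0 (U k)) \<and> traj m P x0 s U N = seq"

definition mpc_feasible ::
  "ctrl \<Rightarrow> ('n::finite) params \<Rightarrow> real ^ 'n \<Rightarrow> real \<Rightarrow> nat \<Rightarrow> 'n state \<Rightarrow> 'n state \<Rightarrow> bool" where
  "mpc_feasible m P x0 C N seq s \<longleftrightarrow> (\<exists>U. mpc_feasible_seq m P x0 C N seq s U)"

definition mpc_cost ::
  "ctrl \<Rightarrow> ('n::finite) params \<Rightarrow> real ^ 'n \<Rightarrow> nat \<Rightarrow> real ^ 'n \<Rightarrow> real ^ 'n \<Rightarrow> real ^ 'n
     \<Rightarrow> 'n state \<Rightarrow> (nat \<Rightarrow> real ^ 'n) \<Rightarrow> real" where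
  "mpc_cost m P x0 N Qa Qd L s U =
     (\<Sum>k<N. \<Sum>i\<in>UNIV.
        - Qa $ i * (fst (traj m P x0 s U k) $ i)^2
        + Qd $ i * (fst (snd (traj m P x0 s U k)) $ i)^2
        + L $ i * (U k $ i)^2)"

definition mpc_optimal ::
  "ctrl \<Rightarrow> ('n::finite) params \<Rightarrow> real ^ 'n \<Rightarrow> real \<Rightarrow> nat \<Rightarrow> real ^ 'n \<Rightarrow> real ^ 'n \<Rightarrow> real ^ 'n
     \<Rightarrow> 'n state \<Rightarrow> 'n state \<Rightarrow> (nat \<Rightarrow> real ^ 'n) \<Rightarrow> bool" where
  "mpc_optimal m P x0 C N Qa Qd L seq s U \<longleftrightarrow>
     mpc_feasible_seq m P x0 C N seq s U \<and>
     (\<forall>U'. mpc_feasible_seq m P x0 C N seq s U' \<longrightarrow>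
            mpc_cost m P x0 N Qa Qd L s U \<le> mpc_cost m P x0 N Qa Qd L s U')"

end

theory Submission
  imports Defs
begin

text \<open>Recursive feasibility by the standard shifting argument: if \<open>U\<close> steers the state \<open>s\<close>
  to the terminal equilibrium in \<open>N\<close> steps, then the tail of \<open>U\<close>, padded with the constant
  equilibrium input \<open>ubar\<close>, steers the successor state \<open>F s (U 0)\<close> there as well, since applying
  \<open>ubar\<close> at the equilibrium keeps the state fixed.\<close>

definition shifted_input :: "nat \<Rightarrow> real ^ 'n \<Rightarrow> (nat \<Rightarrow> real ^ 'n) \<Rightarrow> nat \<Rightarrow> real ^ 'n" where
  "shifted_input N ubar U k = (if k < N - 1 then U (Suc k) else ubar)"

lemma traj_cong:
  assumes "\<And>j. j < k \<Longrightarrow> U j = V j"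
  shows "traj m P x0 s U k = traj m P x0 s V k"
  using assms by (induction k) auto

lemma traj_Suc_shift:
  "traj m P x0 (F m P x0 s (U 0)) (\<lambda>k. U (Suc k)) k = traj m P x0 s U (Suc k)"
  by (induction k) auto

lemma mpc_feasible_seq_shifted_input:
  assumes "N \<ge> 1"
    and "admissible C x0 ubar"
    and "F m P x0 seq ubar = seq"
    and "mpc_feasible_seq m P x0 C N seq s U"
  shows "mpc_feasible_seq m P x0 C N seq (F m P x0 s (U 0)) (shifted_input N ubar U)"
proof -
  obtain k where N: "N = Suc k"
    using assms(1) by (cases N) auto
  let ?s' = "F m P x0 s (U 0)" and ?V = "shifted_input N ubar U"
  have admissible_V: "\<forall>j<N. admissible C x0 (?V j)"
    using assms(2,4) by (auto simp: shifted_input_def mpc_feasible_seq_def)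
  have "traj m P x0 ?s' ?V k = traj m P x0 ?s' (\<lambda>j. U (Suc j)) k"
    by (rule traj_cong) (simp add: shifted_input_def N)
  also have "\<dots> = traj m P x0 s U N"
    by (simp add: traj_Suc_shift N)
  also have "\<dots> = seq"
    using assms(4) by (simp add: mpc_feasible_seq_def)
  finally have "traj m P x0 ?s' ?V N = F m P x0 seq (?V k)"
    by (simp add: N)
  also have "\<dots> = seq"
    using assms(3) by (simp add: shifted_input_def N)
  finally show ?thesis
    using admissible_V by (simp add: mpc_feasible_seq_def)
qed

lemma mpc_feasible_successor:
  assumes "N \<ge> 1"
    and "admissible C x0 ubar"
    and "F m P x0 seq ubar = seq"
    and "mpc_feasible_seq m P x0 C N seq s U"
  shows "mpc_feasible m P x0 C N seq (F m P x0 s (U 0))"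
  using mpc_feasible_seq_shifted_input[OF assms] by (auto simp: mpc_feasible_def)

theorem proposition3:
  fixes m :: ctrl and P :: "('n::finite) params"
    and x0 a0 d0 ubar ac dc xc Qa Qd L :: "real ^ 'n"
    and C :: real and N :: nat
    and s :: "nat \<Rightarrow> 'n state" and Uopt :: "nat \<Rightarrow> nat \<Rightarrow> real ^ 'n"
  assumes "valid_params P"
    and "C > 0" and "N \<ge> 1"
    and "\<forall>i. 0 \<le> a0 $ i \<and> a0 $ i \<le> 1 \<and> 0 \<le> d0 $ i \<and> d0 $ i \<le> 1 \<and> 0 \<le> x0 $ i \<and> x0 $ i \<le> 1"
    and "admissible C x0 ubar"
    and "F m P x0 (ac, dc, xc) ubar = (ac, dc, xc)"
    and "s 0 = (a0, d0, x0)"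
    and "mpc_feasible m P x0 C N (ac, dc, xc) (s 0)"
    and "\<forall>t. (mpc_feasible m P x0 C N (ac, dc, xc) (s t) \<longrightarrow>
               mpc_optimal m P x0 C N Qa Qd L (ac, dc, xc) (s t) (Uopt t))
           \<and> s (Suc t) = F m P x0 (s t) (Uopt t 0)"
  shows "\<forall>t. mpc_feasible m P x0 C N (ac, dc, xc) (s t)"
proof
  fix t
  show "mpc_feasible m P x0 C N (ac, dc, xc) (s t)"
  proof (induction t)
    case 0
    show ?case using assms(8) .
  next
    case (Suc t)
    then have "mpc_feasible_seq m P x0 C N (ac, dc, xc) (s t) (Uopt t)"
      using assms(9) by (simp add: mpc_optimal_def)
    then have "mpc_feasible m P x0 C N (ac, dc, xc) (F m P x0 (s t) (Uopt t 0))"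
      using mpc_feasible_successor assms(3,5,6) by blast
    then show ?case using assms(9) by simp
  qed
qed

end
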